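(* In the setting described in the context, let $U_0,\dots,U_d$ be one of the six decompositions below, with $U_{-1}=U_{d+1}=0$ and empty sums equal to $0$. Then for $0\le i\le d$: $[0D]$: $(K-q^{2i-d}I)U_i\subseteq U_{i+1}+\cdots+U_d$ and $(K^{-1}-q^{d-2i}I)U_i\subseteq U_{i+1}$; $[0^*D^*]$: $(K-q^{2i-d}I)U_i\subseteq U_{i-1}$ and $(K^{-1}-q^{d-2i}I)U_i\subseteq U_0+\cdots+U_{i-1}$; $[0^*D]$: $(K-q^{2i-d}I)U_i=0$ and $(K^{-1}-q^{d-2i}I)U_i=0$; $[0^*0]$: $(K-q^{2i-d}I)U_i\subseteq U_0+\cdots+U_{i-1}$ and $(K^{-1}-q^{d-2i}I)U_i\subseteq U_{i-1}$; $[D^*0]$: $KU_i\subseteq U_0+\cdots+U_{i+1}$ and $K^{-1}U_i\subseteq U_{i-1}+\cdots+U_d$; $[D^*D]$: $(K-q^{2i-d}I)U_i\subseteq U_{i+1}$ and $(K^{-1}-q^{d-2i}I)U_i\subseteq U_{i+1}+\cdots+U_d$.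
   Context: $\mathbb K$ is an algebraically closed field, $q\in\mathbb K$ nonzero and not a root of unity, $V$ a nonzero finite-dimensional $\mathbb K$-vector space. A tridiagonal pair on $V$ is an ordered pair $A,A^*$ of linear maps $V\to V$ such that: (i) each of $A,A^*$ is diagonalizable; (ii) there is an ordering $V_0,\dots,V_d$ of the eigenspaces of $A$ with $A^*V_i\subseteq V_{i-1}+V_i+V_{i+1}$ ($V_{-1}=V_{d+1}=0$); (iii) there is an ordering $V^*_0,\dots,V^*_\delta$ of the eigenspaces of $A^*$ with $AV^*_i\subseteq V^*_{i-1}+V^*_i+V^*_{i+1}$ ($V^*_{-1}=V^*_{\delta+1}=0$); (iv) no subspace $W\ne0,V$ satisfies $AW\subseteq W$, $A^*W\subseteq W$. It is known $d=\delta$; orderings as in (ii),(iii) are called standard. Setting: $A,A^*$ is a tridiagonal pair on $V$; $V_0,\dots,V_d$ (resp. $V^*_0,\dots,V^*_d$) is a standard ordering of the eigenspaces of $A$ (resp. $A^*$); the eigenvalue of $A$ on $V_i$ is $aq^{2i-d}$ and that of $A^*$ on $V^*_i$ is $a^*q^{d-2i}$ for some nonzero $a,a^*\in\mathbb K$. The six decompositions of $V$ (sequences of nonzero subspaces whose sum is direct and equals $V$) are, for $0\le i\le d$: $[0D]$: $U_i=V_i$; $[0^*D^*]$: $U_i=V^*_i$; $[0^*D]$: $U_i=(V^*_0+\cdots+V^*_i)\cap(V_i+\cdots+V_d)$; $[0^*0]$: $U_i=(V^*_0+\cdots+V^*_i)\cap(V_0+\cdots+V_{d-i})$; $[D^*0]$: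 $U_i=(V^*_{d-i}+\cdots+V^*_d)\cap(V_0+\cdots+V_{d-i})$; $[D^*D]$: $U_i=(V^*_{d-i}+\cdots+V^*_d)\cap(V_i+\cdots+V_d)$. $K:V\to V$ is the linear map acting as $q^{2i-d}I$ on the $i$th subspace of $[0^*D]$ for each $i$. *)

theory Defs
  imports "HOL-Analysis.Analysis" "HOL-Computational_Algebra.Polynomial"
begin

text \<open>V is modelled as 'k^'n (every nonzero finite-dimensional space is of this form);
  linear maps V -> V are matrices 'k^'n^'n acting by (*v).\<close>

definition alg_closed_field :: "'k::field itself \<Rightarrow> bool" where
  "alg_closed_field T \<longleftrightarrow> (\<forall>p::'k poly. degree p > 0 \<longrightarrow> (\<exists>x. poly p x = 0))"

definition eigenspace :: "'k::field^'n^'n \<Rightarrow> 'k \<Rightarrow> ('k^'n) set" where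
  "eigenspace A \<theta> = {v. A *v v = \<theta> *s v}"

definition is_eigenvalue :: "'k::field^'n^'n \<Rightarrow> 'k \<Rightarrow> bool" where
  "is_eigenvalue A \<theta> \<longleftrightarrow> eigenspace A \<theta> \<noteq> {0}"

definition diagonalizable :: "'k::field^'n^'n \<Rightarrow> bool" where
  "diagonalizable A \<longleftrightarrow> vec.span (\<Union>\<theta>\<in>{\<theta>. is_eigenvalue A \<theta>}. eigenspace A \<theta>) = UNIV"

definition ssum :: "nat set \<Rightarrow> (nat \<Rightarrow> ('k::field^'n) set) \<Rightarrow> ('k^'n) set" where
  "ssum I U = vec.span (\<Union>j\<in>I. U j)"

definition standard_ordering ::
  "'k::field^'n^'n \<Rightarrow> 'k^'n^'n \<Rightarrow> nat \<Rightarrow> (nat \<Rightarrow> ('k^'n) set) \<Rightarrow> bool" where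
  "standard_ordering A B d Vs \<longleftrightarrow>
     (\<forall>i\<le>d. \<exists>\<theta>. is_eigenvalue A \<theta> \<and> Vs i = eigenspace A \<theta>) \<and>
     (\<forall>\<theta>. is_eigenvalue A \<theta> \<longrightarrow> (\<exists>i\<le>d. Vs i = eigenspace A \<theta>)) \<and>
     inj_on Vs {..d} \<and>
     (\<forall>i\<le>d. (\<lambda>v. B *v v) ` Vs i \<subseteq> ssum {j. j \<le> d \<and> i \<le> j + 1 \<and> j \<le> i + 1} Vs)"

definition tridiagonal_pair :: "'k::field^'n^'n \<Rightarrow> 'k^'n^'n \<Rightarrow> bool" where
  "tridiagonal_pair A As \<longleftrightarrow>
     diagonalizable A \<and> diagonalizable As \<and>
     (\<exists>d Vs. standard_ordering A As d Vs) \<and>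
     (\<exists>\<delta> Vst. standard_ordering As A \<delta> Vst) \<and>
     (\<forall>W. vec.subspace W \<and> (\<lambda>v. A *v v) ` W \<subseteq> W \<and> (\<lambda>v. As *v v) ` W \<subseteq> W
          \<longrightarrow> W = {0} \<or> W = UNIV)"

definition dec_0D :: "nat \<Rightarrow> (nat \<Rightarrow> ('k::field^'n) set) \<Rightarrow> (nat \<Rightarrow> ('k^'n) set) \<Rightarrow> nat \<Rightarrow> ('k^'n) set" where
  "dec_0D d Vs Vst i = Vs i"
definition dec_0sDs :: "nat \<Rightarrow> (nat \<Rightarrow> ('k::field^'n) set) \<Rightarrow> (nat \<Rightarrow> ('k^'n) set) \<Rightarrow> nat \<Rightarrow> ('k^'n) set" where
  "dec_0sDs d Vs Vst i = Vst i"
definition dec_0sD :: "nat \<Rightarrow> (nat \<Rightarrow> ('k::field^'n) set) \<Rightarrow> (nat \<Rightarrow> ('k^'n) set) \<Rightarrow> nat \<Rightarrow> ('k^'n) set" where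
  "dec_0sD d Vs Vst i = ssum {..i} Vst \<inter> ssum {i..d} Vs"
definition dec_0s0 :: "nat \<Rightarrow> (nat \<Rightarrow> ('k::field^'n) set) \<Rightarrow> (nat \<Rightarrow> ('k^'n) set) \<Rightarrow> nat \<Rightarrow> ('k^'n) set" where
  "dec_0s0 d Vs Vst i = ssum {..i} Vst \<inter> ssum {..d - i} Vs"
definition dec_Ds0 :: "nat \<Rightarrow> (nat \<Rightarrow> ('k::field^'n) set) \<Rightarrow> (nat \<Rightarrow> ('k^'n) set) \<Rightarrow> nat \<Rightarrow> ('k^'n) set" where
  "dec_Ds0 d Vs Vst i = ssum {d - i..d} Vst \<inter> ssum {..d - i} Vs"
definition dec_DsD :: "nat \<Rightarrow> (nat \<Rightarrow> ('k::field^'n) set) \<Rightarrow> (nat \<Rightarrow> ('k^'n) set) \<Rightarrow> nat \<Rightarrow> ('k^'n) set" where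
  "dec_DsD d Vs Vst i = ssum {d - i..d} Vst \<inter> ssum {i..d} Vs"

definition shifted_image :: "'k::field^'n^'n \<Rightarrow> 'k \<Rightarrow> ('k^'n) set \<Rightarrow> ('k^'n) set" where
  "shifted_image M c S = (\<lambda>v. M *v v - c *s v) ` S"

end

theory Submission
  imports Defs
begin

text \<open>
  The decomposition [0*D], U_i = (V*_0 + ... + V*_i) \<inter> (V_i + ... + V_d), is the split
  decomposition of the pair: irreducibility forces V_i + ... + V_d = U_i + ... + U_d and
  V*_0 + ... + V*_i = U_0 + ... + U_i, while A - theta_i maps U_i into U_(i+1) and
  A* - theta*_i maps U_i into U_(i-1). Since K acts on U_i as q^(2i-d), this gives the q-Weyl
  relations A K^-1 - q^2 K^-1 A = a (1 - q^2) and A* K - q^2 K A* = a* (1 - q^2). Hence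
  K^-1 - q^(d-2i) maps V_i into the eigenspace of A for q^2 theta_i = theta_(i+1), which is V_(i+1),
  and K - q^(2i-d) maps V*_i into V*_(i-1). Reversing the order of the V_i and/or of the V*_i
  turns [0*0], [D*0] and [D*D] into split decompositions too, and each claim follows by
  intersecting the flags obtained in this way.
\<close>

lemma subspace_ssum [iff]: "vec.subspace (ssum I U)"
  unfolding ssum_def by (rule vec.subspace_span)

lemma zero_in_ssum [simp]: "0 \<in> ssum I U"
  using vec.subspace_0 by blast

lemma ssum_empty [simp]: "ssum {} U = {0}"
  unfolding ssum_def by simp

lemma ssum_mono: "I \<subseteq> J \<Longrightarrow> ssum I U \<subseteq> ssum J U"
  unfolding ssum_def by (intro vec.span_mono) blast

lemma ssum_superset: "j \<in> I \<Longrightarrow> U j \<subseteq> ssum I U"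
  unfolding ssum_def using vec.span_superset by blast

lemma ssum_least: "vec.subspace W \<Longrightarrow> (\<And>j. j \<in> I \<Longrightarrow> U j \<subseteq> W) \<Longrightarrow> ssum I U \<subseteq> W"
  unfolding ssum_def by (intro vec.span_minimal) auto

lemma ssum_cong: "(\<And>j. j \<in> I \<Longrightarrow> U j = U' j) \<Longrightarrow> ssum I U = ssum I U'"
  unfolding ssum_def by simp

lemma ssum_reindex: "ssum I (\<lambda>j. U (f j)) = ssum (f ` I) U"
  unfolding ssum_def by (simp add: image_image)

lemma ssum_singleton: "vec.subspace (U j) \<Longrightarrow> ssum {j} U = U j"
  unfolding ssum_def by simp

lemma ssum_Un: "ssum (I \<union> J) U = {x + y |x y. x \<in> ssum I U \<and> y \<in> ssum J U}"
  unfolding ssum_def by (simp add: vec.span_Un)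

lemma image_reverse_atLeastAtMost:
  assumes "i \<le> j" "j \<le> (d::nat)"
  shows "(\<lambda>k. d - k) ` {i..j} = {d - j..d - i}"
proof (intro set_eqI iffI)
  fix x assume "x \<in> {d - j..d - i}"
  then show "x \<in> (\<lambda>k. d - k) ` {i..j}"
    using assms by (intro image_eqI[of _ _ "d - x"]) auto
qed (use assms in auto)

lemma ssum_reverse_atLeastAtMost: "i \<le> d \<Longrightarrow> ssum {i..d} (\<lambda>j. U (d - j)) = ssum {..d - i} U"
  by (simp add: ssum_reindex image_reverse_atLeastAtMost atMost_atLeast0)

lemma ssum_reverse_atMost: "i \<le> d \<Longrightarrow> ssum {..i} (\<lambda>j. U (d - j)) = ssum {d - i..d} U"
  by (simp add: ssum_reindex image_reverse_atLeastAtMost atMost_atLeast0)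

lemma linear_shift: "Vector_Spaces.linear (*s) (*s) (\<lambda>v. M *v v - c *s v)"
  by (intro vec.linear_compose_sub matrix_vector_mul_linear_gen vec.linear_scale_self)

lemma shifted_image_zero: "(\<lambda>v. M *v v) ` S = shifted_image M 0 S"
  by (simp add: shifted_image_def)

lemma shifted_image_mono: "S \<subseteq> T \<Longrightarrow> shifted_image M c S \<subseteq> shifted_image M c T"
  unfolding shifted_image_def by (rule image_mono)

lemma shifted_image_change:
  assumes "vec.subspace W" "shifted_image M c S \<subseteq> W" "S \<subseteq> W"
  shows "shifted_image M c' S \<subseteq> W"
proof (unfold shifted_image_def, rule image_subsetI)
  fix v assume "v \<in> S"
  then have "M *v v - c *s v \<in> W" "(c - c') *s v \<in> W"
    using assms vec.subspace_scale unfolding shifted_image_def by blast+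
  moreover have "M *v v - c' *s v = (M *v v - c *s v) + (c - c') *s v"
    by (simp add: vec_eq_iff algebra_simps)
  ultimately show "M *v v - c' *s v \<in> W"
    using assms(1) vec.subspace_add by metis
qed

lemma shifted_image_ssum:
  assumes "vec.subspace W" "\<And>j. j \<in> I \<Longrightarrow> shifted_image M c (U j) \<subseteq> W"
  shows "shifted_image M c (ssum I U) \<subseteq> W"
proof -
  have "shifted_image M c (ssum I U) = vec.span (shifted_image M c (\<Union>j\<in>I. U j))"
    unfolding shifted_image_def ssum_def by (rule vec.linear_span_image[OF linear_shift, symmetric])
  also have "\<dots> \<subseteq> W"
    using assms by (intro vec.span_minimal) (auto simp: shifted_image_def)
  finally show ?thesis .
qed

lemma ssum_invariant:
  assumes "\<And>j. j \<in> I \<Longrightarrow> shifted_image M (f j) (U j) \<subseteq> ssum I U"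
  shows "(\<lambda>v. M *v v) ` ssum I U \<subseteq> ssum I U"
  unfolding shifted_image_zero
  by (intro shifted_image_ssum shifted_image_change[OF _ assms] ssum_superset subspace_ssum)

lemma mem_eigenspace [simp]: "v \<in> eigenspace M \<theta> \<longleftrightarrow> M *v v = \<theta> *s v"
  by (simp add: eigenspace_def)

lemma subspace_eigenspace [iff]: "vec.subspace (eigenspace M \<theta>)"
  unfolding vec.subspace_def
  by (simp add: vec.add vec.scale mult.commute)

lemma shifted_image_eigenspace:
  assumes "vec.subspace S" "S \<subseteq> eigenspace M \<theta>"
  shows "shifted_image M \<theta> S = {0}"
  using assms vec.subspace_0 unfolding shifted_image_def by force

lemma shifted_image_diagonal:
  assumes "\<And>j. j \<in> I \<Longrightarrow> U j \<subseteq> eigenspace M (f j)"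
  shows "shifted_image M (f i) (ssum I U) \<subseteq> ssum (I - {i}) U"
proof (rule shifted_image_ssum[OF subspace_ssum])
  fix j assume "j \<in> I"
  then have "shifted_image M (f j) (U j) \<subseteq> {0}"
    using assms[OF \<open>j \<in> I\<close>] unfolding shifted_image_def by auto
  then have diag: "shifted_image M (f j) (U j) \<subseteq> ssum (I - {i}) U"
    using zero_in_ssum by blast
  show "shifted_image M (f i) (U j) \<subseteq> ssum (I - {i}) U"
  proof (cases "j = i")
    case False
    then have "U j \<subseteq> ssum (I - {i}) U"
      using \<open>j \<in> I\<close> by (intro ssum_superset) simp
    with diag show ?thesis
      by (rule shifted_image_change[OF subspace_ssum])
  qed (use diag in simp)
qed

lemma eigenspace_inter_ssum:
  assumes "finite J" "\<And>j. j \<in> J \<Longrightarrow> U j \<subseteq> eigenspace A (\<theta> j)" "\<mu> \<notin> \<theta> ` J"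
  shows "eigenspace A \<mu> \<inter> ssum J U = {0}"
  using assms
proof (induction J rule: finite_induct)
  case empty
  then show ?case by simp
next
  case (insert j J)
  have IH: "eigenspace A \<mu> \<inter> ssum J U = {0}"
    using insert.prems by (intro insert.IH) auto
  have "x = 0" if x: "x \<in> eigenspace A \<mu> \<inter> ssum (insert j J) U" for x
  proof -
    have "insert j J - {j} = J"
      using insert.hyps(2) by blast
    then have "shifted_image A (\<theta> j) (ssum (insert j J) U) \<subseteq> ssum J U"
      using shifted_image_diagonal[of "insert j J" U A \<theta> j, OF insert.prems(1)] by simp
    moreover have "A *v x - \<theta> j *s x \<in> shifted_image A (\<theta> j) (ssum (insert j J) U)"
      unfolding shifted_image_def using x by blast
    moreover have "A *v x - \<theta> j *s x = (\<mu> - \<theta> j) *s x"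
      using x by simp
    ultimately have "(\<mu> - \<theta> j) *s x \<in> ssum J U"
      by (metis subsetD)
    moreover have "(\<mu> - \<theta> j) *s x \<in> eigenspace A \<mu>"
      by (rule vec.subspace_scale[OF subspace_eigenspace]) (use x in blast)
    ultimately have "(\<mu> - \<theta> j) *s x = 0"
      using IH by blast
    then show "x = 0"
      using insert.prems(2) by simp
  qed
  then show ?case
    by auto
qed

lemma zero_in_eigenspace [simp]: "0 \<in> eigenspace M \<theta>"
  unfolding eigenspace_def by simp

lemma standard_ordering_eigenspace:
  assumes "standard_ordering A B d Vs" "is_eigenvalue A \<theta>"
  obtains j where "j \<le> d" "Vs j = eigenspace A \<theta>"
proof -
  have "\<forall>\<theta>. is_eigenvalue A \<theta> \<longrightarrow> (\<exists>i\<le>d. Vs i = eigenspace A \<theta>)"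
    using assms(1) unfolding standard_ordering_def by (rule conjunct1[OF conjunct2])
  then show ?thesis
    using assms(2) that by blast
qed

lemma standard_ordering_nonzero:
  assumes "standard_ordering A B d Vs" "i \<le> d"
  shows "Vs i \<noteq> {0}"
proof -
  obtain \<theta> where "is_eigenvalue A \<theta>" "Vs i = eigenspace A \<theta>"
    using assms unfolding standard_ordering_def by blast
  then show ?thesis
    unfolding is_eigenvalue_def by simp
qed

lemma standard_ordering_shifted_image:
  assumes "standard_ordering A B d Vs" "k \<le> d"
  shows "shifted_image B c (Vs k) \<subseteq> ssum {j. j \<le> d \<and> k \<le> j + 1 \<and> j \<le> k + 1} Vs"
proof (rule shifted_image_change[OF subspace_ssum])
  show "shifted_image B 0 (Vs k) \<subseteq> ssum {j. j \<le> d \<and> k \<le> j + 1 \<and> j \<le> k + 1} Vs"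
    using assms unfolding standard_ordering_def shifted_image_zero[symmetric] by blast
  show "Vs k \<subseteq> ssum {j. j \<le> d \<and> k \<le> j + 1 \<and> j \<le> k + 1} Vs"
    using assms(2) by (intro ssum_superset) simp
qed

lemma eigenspace_subset_ssum:
  assumes "standard_ordering A B d Vs" "\<And>j. j \<le> d \<Longrightarrow> Vs j = eigenspace A (\<theta> j)"
  shows "eigenspace A \<mu> \<subseteq> ssum {j. j \<le> d \<and> \<theta> j = \<mu>} Vs"
proof (cases "is_eigenvalue A \<mu>")
  case True
  with assms(1) obtain j where j: "j \<le> d" "Vs j = eigenspace A \<mu>"
    by (rule standard_ordering_eigenspace)
  obtain v where v: "v \<in> eigenspace A \<mu>" "v \<noteq> 0"
    using True zero_in_eigenspace[of A \<mu>] unfolding is_eigenvalue_def by blast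
  then have "v \<in> eigenspace A (\<theta> j)"
    using j assms(2)[of j] by simp
  then have "(\<theta> j - \<mu>) *s v = 0"
    using v(1) by simp
  then have "j \<in> {j. j \<le> d \<and> \<theta> j = \<mu>}"
    using v(2) j(1) by simp
  then show ?thesis
    using ssum_superset j(2) by metis
next
  case False
  then show ?thesis unfolding is_eigenvalue_def by simp
qed

lemma ssum_standard_ordering_eq_UNIV:
  assumes "diagonalizable A" "standard_ordering A B d Vs"
  shows "ssum {..d} Vs = UNIV"
proof -
  have "eigenspace A \<theta> \<subseteq> ssum {..d} Vs" if eig: "is_eigenvalue A \<theta>" for \<theta>
  proof -
    obtain j where "j \<le> d" "Vs j = eigenspace A \<theta>"
      using assms(2) eig by (rule standard_ordering_eigenspace)
    then show ?thesis
      by (metis atMost_iff ssum_superset)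
  qed
  then have "vec.span (\<Union>\<theta>\<in>{\<theta>. is_eigenvalue A \<theta>}. eigenspace A \<theta>) \<subseteq> ssum {..d} Vs"
    by (intro vec.span_minimal UN_least subspace_ssum) simp
  then show ?thesis
    using assms(1) unfolding diagonalizable_def by (simp add: top.extremum_unique)
qed

lemma standard_ordering_reverse:
  assumes "standard_ordering A B d Vs"
  shows "standard_ordering A B d (\<lambda>j. Vs (d - j))"
  unfolding standard_ordering_def
proof (intro conjI allI impI)
  fix i assume "i \<le> d"
  then show "\<exists>\<theta>. is_eigenvalue A \<theta> \<and> Vs (d - i) = eigenspace A \<theta>"
    using assms unfolding standard_ordering_def by simp
next
  fix \<theta> assume "is_eigenvalue A \<theta>"
  with assms obtain i where "i \<le> d" "Vs i = eigenspace A \<theta>"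
    by (rule standard_ordering_eigenspace)
  then show "\<exists>i\<le>d. Vs (d - i) = eigenspace A \<theta>"
    by (intro exI[of _ "d - i"]) auto
next
  have inj: "inj_on Vs {..d}"
    using assms unfolding standard_ordering_def by blast
  show "inj_on (\<lambda>j. Vs (d - j)) {..d}"
  proof (rule inj_onI)
    fix x y assume "x \<in> {..d}" "y \<in> {..d}" "Vs (d - x) = Vs (d - y)"
    then have "d - x = d - y"
      using inj by (auto simp: inj_on_def)
    then show "x = y"
      using \<open>x \<in> {..d}\<close> \<open>y \<in> {..d}\<close> by simp
  qed
next
  fix i assume i: "i \<le> d"
  have "(\<lambda>j. d - j) ` {j. j \<le> d \<and> i \<le> j + 1 \<and> j \<le> i + 1}
      = {j. j \<le> d \<and> d - i \<le> j + 1 \<and> j \<le> d - i + 1}"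
  proof (intro set_eqI iffI)
    fix x assume "x \<in> {j. j \<le> d \<and> d - i \<le> j + 1 \<and> j \<le> d - i + 1}"
    then show "x \<in> (\<lambda>j. d - j) ` {j. j \<le> d \<and> i \<le> j + 1 \<and> j \<le> i + 1}"
      using i by (intro image_eqI[of _ _ "d - x"]) auto
  qed (use i in auto)
  moreover have "(\<lambda>v. B *v v) ` Vs (d - i)
      \<subseteq> ssum {j. j \<le> d \<and> d - i \<le> j + 1 \<and> j \<le> d - i + 1} Vs"
    using assms unfolding standard_ordering_def by simp
  ultimately show "(\<lambda>v. B *v v) ` Vs (d - i)
      \<subseteq> ssum {j. j \<le> d \<and> i \<le> j + 1 \<and> j \<le> i + 1} (\<lambda>j. Vs (d - j))"
    unfolding ssum_reindex by simp
qed

lemma dec_0D_eq [simp]: "dec_0D d Vs Vst = Vs"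
  by (simp add: fun_eq_iff dec_0D_def)

lemma dec_0sDs_eq [simp]: "dec_0sDs d Vs Vst = Vst"
  by (simp add: fun_eq_iff dec_0sDs_def)

lemma dec_0sD_lessThan: "dec_0sD d Vs Vst i = ssum {..<Suc i} Vst \<inter> ssum {i..d} Vs"
  unfolding dec_0sD_def lessThan_Suc_atMost ..

lemma subspace_dec_0sD [iff]: "vec.subspace (dec_0sD d Vs Vst i)"
  unfolding dec_0sD_def by (intro vec.subspace_inter subspace_ssum)

lemma dec_0sD_beyond: "d < i \<Longrightarrow> dec_0sD d Vs Vst i = {0}"
  unfolding dec_0sD_def by simp

lemma dec_0s0_reverse: "i \<le> d \<Longrightarrow> dec_0s0 d Vs Vst i = dec_0sD d (\<lambda>j. Vs (d - j)) Vst i"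
  unfolding dec_0s0_def dec_0sD_def by (simp add: ssum_reverse_atLeastAtMost)

lemma dec_Ds0_reverse:
  "i \<le> d \<Longrightarrow> dec_Ds0 d Vs Vst i = dec_0sD d (\<lambda>j. Vs (d - j)) (\<lambda>j. Vst (d - j)) i"
  unfolding dec_Ds0_def dec_0sD_def by (simp add: ssum_reverse_atLeastAtMost ssum_reverse_atMost)

lemma dec_DsD_reverse: "i \<le> d \<Longrightarrow> dec_DsD d Vs Vst i = dec_0sD d Vs (\<lambda>j. Vst (d - j)) i"
  unfolding dec_DsD_def dec_0sD_def by (simp add: ssum_reverse_atMost)

lemma ssum_cong_atMost:
  "(\<And>i. i \<le> d \<Longrightarrow> U i = U' i) \<Longrightarrow> I \<subseteq> {..d} \<Longrightarrow> ssum I U = ssum I U'"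
  by (rule ssum_cong) auto

text \<open>In lemma names, the tail at i is V_i + ... + V_d and the head at i is V*_0 + ... + V*_(i-1).\<close>

locale tridiagonal_setting =
  fixes A As :: "'k::field^'n::finite^'n" and d :: nat
    and Vs Vst :: "nat \<Rightarrow> ('k^'n) set" and th ths :: "nat \<Rightarrow> 'k"
  assumes tridiagonal: "tridiagonal_pair A As"
    and ordering: "standard_ordering A As d Vs"
    and dual_ordering: "standard_ordering As A d Vst"
    and eigenspaces: "\<And>i. i \<le> d \<Longrightarrow> Vs i = eigenspace A (th i)"
    and dual_eigenspaces: "\<And>i. i \<le> d \<Longrightarrow> Vst i = eigenspace As (ths i)"
begin

lemma reverse: "tridiagonal_setting A As d (\<lambda>j. Vs (d - j)) Vst (\<lambda>j. th (d - j)) ths"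
  using tridiagonal standard_ordering_reverse[OF ordering] dual_ordering
  by unfold_locales (simp_all add: eigenspaces dual_eigenspaces)

lemma reverse_dual: "tridiagonal_setting A As d Vs (\<lambda>j. Vst (d - j)) th (\<lambda>j. ths (d - j))"
  using tridiagonal ordering standard_ordering_reverse[OF dual_ordering]
  by unfold_locales (simp_all add: eigenspaces dual_eigenspaces)

lemma irreducible:
  assumes "vec.subspace W" "(\<lambda>v. A *v v) ` W \<subseteq> W" "(\<lambda>v. As *v v) ` W \<subseteq> W" "W \<noteq> {0}"
  shows "W = UNIV"
proof -
  have "\<forall>W. vec.subspace W \<and> (\<lambda>v. A *v v) ` W \<subseteq> W \<and> (\<lambda>v. As *v v) ` W \<subseteq> W
      \<longrightarrow> W = {0} \<or> W = UNIV"
    using tridiagonal unfolding tridiagonal_pair_def by (elim conjE)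
  then show ?thesis
    using assms by blast
qed

lemma tail_0_eq_UNIV: "ssum {0..d} Vs = UNIV"
proof -
  have "diagonalizable A"
    using tridiagonal unfolding tridiagonal_pair_def by (elim conjE)
  then show ?thesis
    using ssum_standard_ordering_eq_UNIV[OF _ ordering] by (simp add: atMost_atLeast0)
qed

lemma eigenvalues_distinct: "i \<le> d \<Longrightarrow> j \<le> d \<Longrightarrow> th i = th j \<Longrightarrow> i = j"
  using ordering eigenspaces unfolding standard_ordering_def inj_on_def by (metis atMost_iff)

lemma tail_raising: "shifted_image A (th i) (ssum {i..d} Vs) \<subseteq> ssum {Suc i..d} Vs"
proof -
  have "shifted_image A (th i) (ssum {i..d} Vs) \<subseteq> ssum ({i..d} - {i}) Vs"
    by (rule shifted_image_diagonal) (simp add: eigenspaces)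
  also have "{i..d} - {i} = {Suc i..d}"
    by auto
  finally show ?thesis .
qed

lemma head_lowering:
  assumes "i \<le> d"
  shows "shifted_image As (ths i) (ssum {..<Suc i} Vst) \<subseteq> ssum {..<i} Vst"
proof -
  have "shifted_image As (ths i) (ssum {..<Suc i} Vst) \<subseteq> ssum ({..<Suc i} - {i}) Vst"
    using assms by (intro shifted_image_diagonal) (simp add: dual_eigenspaces)
  also have "{..<Suc i} - {i} = {..<i}"
    by auto
  finally show ?thesis .
qed

lemma head_raising:
  assumes "i \<le> Suc d"
  shows "shifted_image A c (ssum {..<i} Vst) \<subseteq> ssum {..<Suc i} Vst"
proof (rule shifted_image_ssum[OF subspace_ssum])
  fix k assume k: "k \<in> {..<i}"
  then have "shifted_image A c (Vst k) \<subseteq> ssum {j. j \<le> d \<and> k \<le> j + 1 \<and> j \<le> k + 1} Vst"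
    using assms by (intro standard_ordering_shifted_image[OF dual_ordering]) simp
  also have "\<dots> \<subseteq> ssum {..<Suc i} Vst"
    using k by (intro ssum_mono) auto
  finally show "shifted_image A c (Vst k) \<subseteq> ssum {..<Suc i} Vst" .
qed

lemma tail_lowering: "shifted_image As c (ssum {i..d} Vs) \<subseteq> ssum {i - 1..d} Vs"
proof (rule shifted_image_ssum[OF subspace_ssum])
  fix k assume k: "k \<in> {i..d}"
  then have "shifted_image As c (Vs k) \<subseteq> ssum {j. j \<le> d \<and> k \<le> j + 1 \<and> j \<le> k + 1} Vs"
    by (intro standard_ordering_shifted_image[OF ordering]) simp
  also have "\<dots> \<subseteq> ssum {i - 1..d} Vs"
    using k by (intro ssum_mono) auto
  finally show "shifted_image As c (Vs k) \<subseteq> ssum {i - 1..d} Vs" .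
qed

lemma tail_1_neq_UNIV: "ssum {1..d} Vs \<noteq> UNIV"
proof
  assume "ssum {1..d} Vs = UNIV"
  then have "Vs 0 \<subseteq> eigenspace A (th 0) \<inter> ssum {1..d} Vs"
    using eigenspaces by auto
  also have "\<dots> = {0}"
  proof (rule eigenspace_inter_ssum)
    show "th 0 \<notin> th ` {1..d}"
      using eigenvalues_distinct[of 0] by fastforce
  qed (auto simp: eigenspaces)
  finally show False
    using standard_ordering_nonzero[OF ordering, of 0] eigenspaces[of 0] by auto
qed

lemma head_inter_tail: "ssum {..<i} Vst \<inter> ssum {i..d} Vs = {0}"
proof -
  \<comment> \<open>The sum W of the intersections at 1, ..., d is invariant under A and A* and lies in the
    proper subspace V_1 + ... + V_d, so it vanishes.\<close>
  define Z where "Z k = ssum {..<k} Vst \<inter> ssum {k..d} Vs" for k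
  define W where "W = ssum {1..d} Z"
  have Z_W: "Z k \<subseteq> W" for k
  proof (cases "k \<in> {1..d}")
    case False
    then have "k = 0 \<or> d < k"
      by auto
    then have "Z k = {0}"
      unfolding Z_def by auto
    then show ?thesis
      unfolding W_def by simp
  qed (simp add: W_def ssum_superset)
  have "(\<lambda>v. A *v v) ` W \<subseteq> W"
    unfolding W_def
  proof (rule ssum_invariant)
    fix k
    have "shifted_image A (th k) (Z k) \<subseteq> Z (Suc k)" if "k \<in> {1..d}"
      using tail_raising[of k] head_raising[where i = k and c = "th k"] that
      unfolding Z_def shifted_image_def by auto
    then show "k \<in> {1..d} \<Longrightarrow> shifted_image A (th k) (Z k) \<subseteq> ssum {1..d} Z"
      using Z_W[of "Suc k"] unfolding W_def by blast
  qed
  moreover have "(\<lambda>v. As *v v) ` W \<subseteq> W"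
    unfolding W_def
  proof (rule ssum_invariant)
    fix k
    have "shifted_image As (ths (k - 1)) (Z k) \<subseteq> Z (k - 1)" if k: "1 \<le> k" "k \<le> d"
    proof -
      have "shifted_image As (ths (k - 1)) (ssum {..<k} Vst) \<subseteq> ssum {..<k - 1} Vst"
        using head_lowering[of "k - 1"] k by simp
      then show ?thesis
        using tail_lowering[where i = k and c = "ths (k - 1)"]
        unfolding Z_def shifted_image_def by blast
    qed
    then show "k \<in> {1..d} \<Longrightarrow> shifted_image As (ths (k - 1)) (Z k) \<subseteq> ssum {1..d} Z"
      using Z_W[of "k - 1"] unfolding W_def by (meson atLeastAtMost_iff order_trans)
  qed
  moreover have "W \<subseteq> ssum {1..d} Vs"
    unfolding W_def
  proof (rule ssum_least[OF subspace_ssum])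
    fix j assume "j \<in> {1..d}"
    then have "ssum {j..d} Vs \<subseteq> ssum {1..d} Vs"
      by (intro ssum_mono) auto
    then show "Z j \<subseteq> ssum {1..d} Vs"
      unfolding Z_def by blast
  qed
  ultimately have "W = {0}"
    using irreducible[of W] tail_1_neq_UNIV unfolding W_def by blast
  then have "Z i \<subseteq> {0}"
    using Z_W by blast
  then show ?thesis
    unfolding Z_def by auto
qed

lemma split_raising:
  assumes "i \<le> d"
  shows "shifted_image A (th i) (dec_0sD d Vs Vst i) \<subseteq> dec_0sD d Vs Vst (Suc i)"
  using tail_raising[of i] head_raising[where i = "Suc i" and c = "th i"] assms
  unfolding dec_0sD_lessThan shifted_image_def by auto

lemma split_lowering:
  assumes "i \<le> d"
  shows "shifted_image As (ths i) (dec_0sD d Vs Vst i) \<subseteq> ssum {j. j + 1 = i} (dec_0sD d Vs Vst)"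
proof (cases i)
  case 0
  then show ?thesis
    using head_lowering[of 0] unfolding dec_0sD_lessThan shifted_image_def by auto
next
  case (Suc k)
  then have "shifted_image As (ths i) (dec_0sD d Vs Vst i) \<subseteq> dec_0sD d Vs Vst k"
    using head_lowering[OF assms] tail_lowering[where i = i and c = "ths i"]
    unfolding dec_0sD_lessThan shifted_image_def by auto
  moreover have "{j. j + 1 = i} = {k}"
    using Suc by auto
  ultimately show ?thesis
    by (simp add: ssum_singleton)
qed

lemma dec_0sD_subset_ssum: "dec_0sD d Vs Vst k \<subseteq> ssum {..d} (dec_0sD d Vs Vst)"
  by (cases "k \<le> d") (simp_all add: ssum_superset dec_0sD_beyond)

lemma split_spans: "ssum {..d} (dec_0sD d Vs Vst) = UNIV"
proof (rule irreducible)
  show "(\<lambda>v. A *v v) ` ssum {..d} (dec_0sD d Vs Vst) \<subseteq> ssum {..d} (dec_0sD d Vs Vst)"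
  proof (rule ssum_invariant)
    fix j assume "j \<in> {..d}"
    then show "shifted_image A (th j) (dec_0sD d Vs Vst j) \<subseteq> ssum {..d} (dec_0sD d Vs Vst)"
      using split_raising dec_0sD_subset_ssum by (meson atMost_iff order_trans)
  qed
  show "(\<lambda>v. As *v v) ` ssum {..d} (dec_0sD d Vs Vst) \<subseteq> ssum {..d} (dec_0sD d Vs Vst)"
  proof (rule ssum_invariant)
    fix j assume "j \<in> {..d}"
    moreover have "ssum {k. k + 1 = j} (dec_0sD d Vs Vst) \<subseteq> ssum {..d} (dec_0sD d Vs Vst)"
      using \<open>j \<in> {..d}\<close> by (intro ssum_mono) auto
    ultimately show "shifted_image As (ths j) (dec_0sD d Vs Vst j) \<subseteq> ssum {..d} (dec_0sD d Vs Vst)"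
      using split_lowering by (meson atMost_iff order_trans)
  qed
  have "Vst 0 \<subseteq> dec_0sD d Vs Vst 0"
    using tail_0_eq_UNIV dual_eigenspaces[of 0]
    by (simp add: dec_0sD_def ssum_singleton)
  then show "ssum {..d} (dec_0sD d Vs Vst) \<noteq> {0}"
    using dec_0sD_subset_ssum[of 0] standard_ordering_nonzero[OF dual_ordering, of 0]
      dual_eigenspaces[of 0] by auto
qed auto

lemma head_split_subset: "ssum {..<i} (dec_0sD d Vs Vst) \<subseteq> ssum {..<i} Vst"
proof (rule ssum_least[OF subspace_ssum])
  fix j assume "j \<in> {..<i}"
  then have "ssum {..<Suc j} Vst \<subseteq> ssum {..<i} Vst"
    by (intro ssum_mono) auto
  then show "dec_0sD d Vs Vst j \<subseteq> ssum {..<i} Vst"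
    unfolding dec_0sD_lessThan by blast
qed

lemma tail_split_subset: "ssum {i..d} (dec_0sD d Vs Vst) \<subseteq> ssum {i..d} Vs"
proof (rule ssum_least[OF subspace_ssum])
  fix j assume "j \<in> {i..d}"
  then have "ssum {j..d} Vs \<subseteq> ssum {i..d} Vs"
    by (intro ssum_mono) auto
  then show "dec_0sD d Vs Vst j \<subseteq> ssum {i..d} Vs"
    unfolding dec_0sD_def by blast
qed

lemma split_decompose:
  obtains x y where "v = x + y" "x \<in> ssum {..<i} (dec_0sD d Vs Vst)" "y \<in> ssum {i..d} (dec_0sD d Vs Vst)"
proof -
  have "{..d} \<subseteq> {..<i} \<union> {i..d}"
    by auto
  then have "v \<in> ssum ({..<i} \<union> {i..d}) (dec_0sD d Vs Vst)"
    using split_spans ssum_mono by blast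
  then show ?thesis
    using that unfolding ssum_Un by blast
qed

lemma split_tail: "ssum {i..d} (dec_0sD d Vs Vst) = ssum {i..d} Vs"
proof
  show "ssum {i..d} Vs \<subseteq> ssum {i..d} (dec_0sD d Vs Vst)"
  proof
    fix v assume v: "v \<in> ssum {i..d} Vs"
    obtain x y where xy: "v = x + y" "x \<in> ssum {..<i} (dec_0sD d Vs Vst)"
      "y \<in> ssum {i..d} (dec_0sD d Vs Vst)"
      by (rule split_decompose)
    have "x = v - y"
      using xy(1) by simp
    then have "x \<in> ssum {..<i} Vst \<inter> ssum {i..d} Vs"
      using xy(2,3) v head_split_subset tail_split_subset vec.subspace_diff[OF subspace_ssum] by blast
    then show "v \<in> ssum {i..d} (dec_0sD d Vs Vst)"
      using head_inter_tail xy(1,3) by auto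
  qed
qed (rule tail_split_subset)

lemma split_head: "ssum {..<i} (dec_0sD d Vs Vst) = ssum {..<i} Vst"
proof
  show "ssum {..<i} Vst \<subseteq> ssum {..<i} (dec_0sD d Vs Vst)"
  proof
    fix v assume v: "v \<in> ssum {..<i} Vst"
    obtain x y where xy: "v = x + y" "x \<in> ssum {..<i} (dec_0sD d Vs Vst)"
      "y \<in> ssum {i..d} (dec_0sD d Vs Vst)"
      by (rule split_decompose)
    have "y = v - x"
      using xy(1) by simp
    then have "y \<in> ssum {..<i} Vst \<inter> ssum {i..d} Vs"
      using xy(2,3) v head_split_subset tail_split_subset vec.subspace_diff[OF subspace_ssum] by blast
    then show "v \<in> ssum {..<i} (dec_0sD d Vs Vst)"
      using head_inter_tail xy(1,2) by auto
  qed
qed (rule head_split_subset)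


lemma ssum_dec_0s0:
  assumes "i \<le> Suc d"
  shows "ssum {..<i} (dec_0s0 d Vs Vst) = ssum {..<i} Vst"
proof -
  interpret rev: tridiagonal_setting A As d "\<lambda>j. Vs (d - j)" Vst "\<lambda>j. th (d - j)" ths
    by (rule reverse)
  have "ssum {..<i} (dec_0s0 d Vs Vst) = ssum {..<i} (dec_0sD d (\<lambda>j. Vs (d - j)) Vst)"
    using assms by (intro ssum_cong_atMost dec_0s0_reverse) auto
  then show ?thesis
    by (simp add: rev.split_head)
qed

lemma ssum_dec_Ds0:
  assumes "i \<le> d"
  shows "ssum {..i} (dec_Ds0 d Vs Vst) = ssum {d - i..d} Vst"
    and "ssum {i..d} (dec_Ds0 d Vs Vst) = ssum {..d - i} Vs"
proof -
  interpret rev: tridiagonal_setting A As d "\<lambda>j. Vs (d - j)" "\<lambda>j. Vst (d - j)"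
    "\<lambda>j. th (d - j)" "\<lambda>j. ths (d - j)"
    by (rule tridiagonal_setting.reverse_dual[OF reverse])
  have rev_split: "ssum I (dec_Ds0 d Vs Vst) = ssum I (dec_0sD d (\<lambda>j. Vs (d - j)) (\<lambda>j. Vst (d - j)))"
    if "I \<subseteq> {..d}" for I
    using that by (intro ssum_cong_atMost dec_Ds0_reverse)
  show "ssum {..i} (dec_Ds0 d Vs Vst) = ssum {d - i..d} Vst"
    using assms rev.split_head[of "Suc i"]
    by (simp add: rev_split lessThan_Suc_atMost ssum_reverse_atMost)
  show "ssum {i..d} (dec_Ds0 d Vs Vst) = ssum {..d - i} Vs"
    using assms by (simp add: rev_split rev.split_tail ssum_reverse_atLeastAtMost)
qed

lemma ssum_dec_DsD: "ssum {i..d} (dec_DsD d Vs Vst) = ssum {i..d} Vs"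
proof -
  interpret rev: tridiagonal_setting A As d Vs "\<lambda>j. Vst (d - j)" th "\<lambda>j. ths (d - j)"
    by (rule reverse_dual)
  have "ssum {i..d} (dec_DsD d Vs Vst) = ssum {i..d} (dec_0sD d Vs (\<lambda>j. Vst (d - j)))"
    by (intro ssum_cong_atMost dec_DsD_reverse) auto
  then show ?thesis
    by (simp add: rev.split_tail)
qed

lemma tail_diagonal:
  assumes "\<And>j. dec_0sD d Vs Vst j \<subseteq> eigenspace M (f j)"
  shows "shifted_image M (f i) (ssum {i..d} Vs) \<subseteq> ssum {Suc i..d} Vs"
proof -
  have "shifted_image M (f i) (ssum {i..d} (dec_0sD d Vs Vst)) \<subseteq> ssum ({i..d} - {i}) (dec_0sD d Vs Vst)"
    using assms by (rule shifted_image_diagonal)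
  also have "{i..d} - {i} = {Suc i..d}"
    by auto
  finally show ?thesis
    unfolding split_tail .
qed

lemma head_diagonal:
  assumes "\<And>j. dec_0sD d Vs Vst j \<subseteq> eigenspace M (f j)"
  shows "shifted_image M (f i) (ssum {..i} Vst) \<subseteq> ssum {..<i} Vst"
proof -
  have "shifted_image M (f i) (ssum {..<Suc i} (dec_0sD d Vs Vst))
      \<subseteq> ssum ({..<Suc i} - {i}) (dec_0sD d Vs Vst)"
    using assms by (rule shifted_image_diagonal)
  also have "{..<Suc i} - {i} = {..<i}"
    by auto
  finally show ?thesis
    unfolding split_head by (simp only: lessThan_Suc_atMost)
qed

end

lemma invertible_if_eigenspaces_span:
  fixes K :: "'k::field^'n::finite^'n"
  assumes "ssum I U = UNIV" "\<And>j. j \<in> I \<Longrightarrow> U j \<subseteq> eigenspace K (c j)"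
    and "\<And>j. j \<in> I \<Longrightarrow> c j \<noteq> 0"
  shows "invertible K"
proof -
  have "U j \<subseteq> range (\<lambda>x. K *v x)" if "j \<in> I" for j
  proof
    fix u assume "u \<in> U j"
    then have "K *v u = c j *s u"
      using assms(2)[OF that] by auto
    then have "K *v (inverse (c j) *s u) = u"
      using assms(3)[OF that] by (simp add: vec.scale)
    then show "u \<in> range (\<lambda>x. K *v x)"
      by (metis rangeI)
  qed
  then have "ssum I U \<subseteq> range (\<lambda>x. K *v x)"
    by (intro ssum_least vec.linear_subspace_image[OF matrix_vector_mul_linear_gen] vec.subspace_UNIV)
  then have "surj (\<lambda>x. K *v x)"
    using assms(1) by auto
  then show ?thesis
    by (simp add: invertible_right_inverse matrix_right_invertible_surjective)
qed

lemma matrix_inv_left: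
  assumes "invertible K"
  shows "matrix_inv K ** K = mat 1"
proof -
  have "K ** matrix_inv K = mat 1 \<and> matrix_inv K ** K = mat 1"
    using assms unfolding invertible_def matrix_inv_def by (rule someI_ex)
  then show ?thesis ..
qed

lemma eigenspace_matrix_inv:
  fixes K :: "'k::field^'n::finite^'n"
  assumes "invertible K" "c \<noteq> 0"
  shows "eigenspace K c \<subseteq> eigenspace (matrix_inv K) (inverse c)"
proof
  fix v assume "v \<in> eigenspace K c"
  then have "v = c *s (matrix_inv K *v v)"
    using matrix_inv_left[OF assms(1)]
    by (metis mem_eigenspace matrix_vector_mul_assoc matrix_vector_mul_lid vec.scale)
  then have "inverse c *s v = matrix_inv K *v v"
    using assms(2) by (metis vector_smult_assoc left_inverse vector_smult_lid)
  then show "v \<in> eigenspace (matrix_inv K) (inverse c)"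
    by simp
qed

lemma q_weyl_relation:
  fixes X L :: "'k::field^'n::finite^'n"
  assumes spans: "ssum I U = UNIV"
    and L_diagonal: "\<And>j. j \<in> I \<Longrightarrow> U j \<subseteq> eigenspace L (\<beta> j)"
    and X_shift: "\<And>j. j \<in> I \<Longrightarrow> shifted_image X (\<mu> j) (U j) \<subseteq> eigenspace L (\<beta> j / \<rho>)"
    and product: "\<And>j. j \<in> I \<Longrightarrow> \<beta> j * \<mu> j = \<kappa>"
    and "\<rho> \<noteq> 0"
  shows "X *v (L *v x) - \<rho> *s (L *v (X *v x)) = (\<kappa> * (1 - \<rho>)) *s x"
proof -
  have "(X ** L) *v u - \<rho> *s ((L ** X) *v u) = (\<kappa> * (1 - \<rho>)) *s u"
    if "u \<in> (\<Union>j\<in>I. U j)" for u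
  proof -
    from that obtain j where j: "j \<in> I" "u \<in> U j"
      by blast
    define r where "r = X *v u - \<mu> j *s u"
    have Lu: "L *v u = \<beta> j *s u"
      using L_diagonal[OF j(1)] j(2) by auto
    have Lr: "\<rho> *s (L *v r) = \<beta> j *s r"
      using X_shift[OF j(1)] j(2) \<open>\<rho> \<noteq> 0\<close> unfolding r_def shifted_image_def
      by auto
    have Xu: "X *v u = \<mu> j *s u + r"
      unfolding r_def by simp
    have "(X ** L) *v u - \<rho> *s ((L ** X) *v u)
        = \<beta> j *s (\<mu> j *s u + r) - \<rho> *s (L *v (\<mu> j *s u + r))"
      by (simp add: matrix_vector_mul_assoc[symmetric] Lu Xu vec.scale)
    also have "\<dots> = (\<beta> j * \<mu> j * (1 - \<rho>)) *s u"
      using Lr by (simp add: vec.add vec.scale Lu vec_eq_iff algebra_simps)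
    finally show ?thesis
      using product[OF j(1)] by simp
  qed
  moreover have "Vector_Spaces.linear (*s) (*s) (\<lambda>x. (X ** L) *v x - \<rho> *s ((L ** X) *v x))"
    by (intro vec.linear_compose_sub vec.linear_compose_scale_right matrix_vector_mul_linear_gen)
  moreover have "x \<in> vec.span (\<Union>j\<in>I. U j)"
    using spans unfolding ssum_def by simp
  ultimately have "(X ** L) *v x - \<rho> *s ((L ** X) *v x) = (\<kappa> * (1 - \<rho>)) *s x"
    using vec.linear_eq_on_span[OF _ vec.linear_scale_self] by blast
  then show ?thesis
    by (simp add: matrix_vector_mul_assoc)
qed

lemma q_weyl_eigenvector_shift:
  fixes X L :: "'k::field^'n::finite^'n"
  assumes weyl: "\<And>x. X *v (L *v x) - \<rho> *s (L *v (X *v x)) = (\<kappa> * (1 - \<rho>)) *s x"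
    and "\<beta> * \<mu> = \<kappa>"
  shows "shifted_image L \<beta> (eigenspace X \<mu>) \<subseteq> eigenspace X (\<rho> * \<mu>)"
proof (unfold shifted_image_def, rule image_subsetI)
  fix v assume "v \<in> eigenspace X \<mu>"
  then have "X *v (L *v v) = (\<kappa> * (1 - \<rho>)) *s v + (\<rho> * \<mu>) *s (L *v v)"
    using weyl[of v] by (simp add: vec.scale diff_eq_eq)
  then show "L *v v - \<beta> *s v \<in> eigenspace X (\<rho> * \<mu>)"
    using \<open>v \<in> eigenspace X \<mu>\<close>
    by (simp add: vec.diff vec.scale vec_eq_iff algebra_simps flip: assms(2))
qed

lemma power_int_inj:
  fixes q :: "'k::field"
  assumes "q \<noteq> 0" "\<forall>m::nat. m > 0 \<longrightarrow> q ^ m \<noteq> 1" "q powi m = q powi n"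
  shows "m = n"
proof (rule ccontr)
  assume "m \<noteq> n"
  define k where "k = nat \<bar>m - n\<bar>"
  have "q powi (m - n) = 1"
    using assms(1,3) by (simp add: power_int_diff)
  then have "q powi \<bar>m - n\<bar> = 1"
    using assms(1) by (cases "m - n \<ge> 0") (simp_all, metis minus_diff_eq power_int_minus inverse_1)
  then have "q ^ k = 1"
    unfolding k_def by (metis abs_ge_zero nat_0_le power_int_of_nat)
  moreover have "k > 0"
    using \<open>m \<noteq> n\<close> unfolding k_def by simp
  ultimately show False
    using assms(2) by blast
qed

lemma power_int_geometric:
  fixes q :: "'k::field"
  assumes "q \<noteq> 0"
  shows "q powi (2 * int (Suc i) - int d) = q\<^sup>2 * q powi (2 * int i - int d)"
proof -
  have "2 * int (Suc i) - int d = 2 + (2 * int i - int d)"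
    by simp
  then show ?thesis
    by (simp only: power_int_add[OF disjI1[OF assms]]) simp
qed

lemma power_int_geometric_inj:
  fixes q :: "'k::field"
  assumes "q \<noteq> 0" "\<forall>m::nat. m > 0 \<longrightarrow> q ^ m \<noteq> 1"
  shows "inj (\<lambda>i. q powi (2 * int i - int d))"
proof (rule injI)
  fix i j assume "q powi (2 * int i - int d) = q powi (2 * int j - int d)"
  then have "2 * int i - int d = 2 * int j - int d"
    by (rule power_int_inj[OF assms])
  then show "i = j"
    by simp
qed

text \<open>Here c i stands for q^(2i-d).\<close>

locale tridiagonal_K_setting =
  tridiagonal_setting A As d Vs Vst "\<lambda>i. a * c i" "\<lambda>i. as * inverse (c i)"
  for A As :: "'k::field^'n::finite^'n" and d Vs Vst and a as :: 'k and c :: "nat \<Rightarrow> 'k" +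
  fixes K :: "'k^'n^'n" and q :: 'k
  assumes c_nonzero: "c i \<noteq> 0"
    and c_Suc: "c (Suc i) = q\<^sup>2 * c i"
    and c_inj: "inj c"
    and a_nonzero: "a \<noteq> 0" and as_nonzero: "as \<noteq> 0"
    and K_on_split: "i \<le> d \<Longrightarrow> dec_0sD d Vs Vst i \<subseteq> eigenspace K (c i)"
begin

lemma q_nonzero: "q \<noteq> 0"
  using c_Suc[of 0] c_nonzero[of "Suc 0"] by auto

lemma split_K: "dec_0sD d Vs Vst i \<subseteq> eigenspace K (c i)"
  using K_on_split by (cases "i \<le> d") (simp_all add: dec_0sD_beyond)

lemma K_invertible: "invertible K"
  using split_spans split_K c_nonzero by (rule invertible_if_eigenspaces_span)

lemma split_Kinv: "dec_0sD d Vs Vst i \<subseteq> eigenspace (matrix_inv K) (inverse (c i))"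
  using split_K eigenspace_matrix_inv[OF K_invertible c_nonzero] by blast

lemma weyl_A_Kinv: "A *v (matrix_inv K *v x) - q\<^sup>2 *s (matrix_inv K *v (A *v x)) = (a * (1 - q\<^sup>2)) *s x"
proof (rule q_weyl_relation[OF split_spans split_Kinv])
  fix j
  have "shifted_image A (a * c j) (dec_0sD d Vs Vst j) \<subseteq> dec_0sD d Vs Vst (Suc j)" if "j \<le> d"
    using split_raising[OF that] by simp
  moreover have "inverse (c (Suc j)) = inverse (c j) / q\<^sup>2"
    by (simp add: c_Suc field_simps)
  ultimately show "j \<in> {..d} \<Longrightarrow> shifted_image A (a * c j) (dec_0sD d Vs Vst j)
      \<subseteq> eigenspace (matrix_inv K) (inverse (c j) / q\<^sup>2)"
    using split_Kinv[of "Suc j"] by auto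
  show "inverse (c j) * (a * c j) = a"
    using c_nonzero[of j] by simp
qed (simp add: q_nonzero)

lemma weyl_As_K: "As *v (K *v x) - q\<^sup>2 *s (K *v (As *v x)) = (as * (1 - q\<^sup>2)) *s x"
proof (rule q_weyl_relation[OF split_spans split_K])
  fix j
  have "ssum {k. k + 1 = j} (dec_0sD d Vs Vst) \<subseteq> eigenspace K (c j / q\<^sup>2)"
  proof (rule ssum_least[OF subspace_eigenspace])
    fix k assume "k \<in> {k. k + 1 = j}"
    then have "c k = c j / q\<^sup>2"
      using c_Suc[of k] q_nonzero by (auto simp: field_simps)
    then show "dec_0sD d Vs Vst k \<subseteq> eigenspace K (c j / q\<^sup>2)"
      using split_K[of k] by simp
  qed
  then show "j \<in> {..d} \<Longrightarrow> shifted_image As (as * inverse (c j)) (dec_0sD d Vs Vst j)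
      \<subseteq> eigenspace K (c j / q\<^sup>2)"
    using split_lowering[of j] by auto
  show "c j * (as * inverse (c j)) = as"
    using c_nonzero[of j] by simp
qed (simp add: q_nonzero)

lemma Kinv_eigenspace:
  assumes "i \<le> d"
  shows "shifted_image (matrix_inv K) (inverse (c i)) (Vs i) \<subseteq> ssum {j. j \<le> d \<and> j = Suc i} Vs"
proof -
  have "shifted_image (matrix_inv K) (inverse (c i)) (eigenspace A (a * c i))
      \<subseteq> eigenspace A (q\<^sup>2 * (a * c i))"
    using c_nonzero[of i] by (intro q_weyl_eigenvector_shift[OF weyl_A_Kinv]) simp
  also have "\<dots> \<subseteq> ssum {j. j \<le> d \<and> a * c j = q\<^sup>2 * (a * c i)} Vs"
    using ordering eigenspaces by (rule eigenspace_subset_ssum)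
  also have "{j. j \<le> d \<and> a * c j = q\<^sup>2 * (a * c i)} = {j. j \<le> d \<and> j = Suc i}"
    using a_nonzero c_inj by (auto simp: c_Suc[symmetric] inj_eq)
  finally show ?thesis
    using eigenspaces[OF assms] by simp
qed

lemma K_dual_eigenspace:
  assumes "i \<le> d"
  shows "shifted_image K (c i) (Vst i) \<subseteq> ssum {j. j \<le> d \<and> Suc j = i} Vst"
proof -
  have "shifted_image K (c i) (eigenspace As (as * inverse (c i)))
      \<subseteq> eigenspace As (q\<^sup>2 * (as * inverse (c i)))"
    using c_nonzero[of i] by (intro q_weyl_eigenvector_shift[OF weyl_As_K]) simp
  also have "\<dots> \<subseteq> ssum {j. j \<le> d \<and> as * inverse (c j) = q\<^sup>2 * (as * inverse (c i))} Vst"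
    using dual_ordering dual_eigenspaces by (rule eigenspace_subset_ssum)
  also have "{j. j \<le> d \<and> as * inverse (c j) = q\<^sup>2 * (as * inverse (c i))}
      = {j. j \<le> d \<and> Suc j = i}"
  proof -
    have "as * inverse (c j) = q\<^sup>2 * (as * inverse (c i)) \<longleftrightarrow> c i = c (Suc j)" for j
      using as_nonzero c_nonzero[of i] c_nonzero[of j] q_nonzero
      by (auto simp: c_Suc field_simps)
    then show ?thesis
      using c_inj by (auto simp: inj_eq)
  qed
  finally show ?thesis
    using dual_eigenspaces[OF assms] by simp
qed

lemma Kinv_head:
  assumes "m < d"
  shows "shifted_image (matrix_inv K) \<mu> (ssum {..m} Vs) \<subseteq> ssum {..Suc m} Vs"
proof (rule shifted_image_ssum[OF subspace_ssum])
  fix k assume k: "k \<in> {..m}"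
  have "shifted_image (matrix_inv K) (inverse (c k)) (Vs k) \<subseteq> ssum {j. j \<le> d \<and> j = Suc k} Vs"
    using k assms by (intro Kinv_eigenspace) simp
  also have "\<dots> \<subseteq> ssum {..Suc m} Vs"
    using k by (intro ssum_mono) auto
  finally show "shifted_image (matrix_inv K) \<mu> (Vs k) \<subseteq> ssum {..Suc m} Vs"
    by (rule shifted_image_change[OF subspace_ssum]) (use k in \<open>auto intro!: ssum_superset\<close>)
qed

lemma K_dual_tail:
  assumes "i \<le> d"
  shows "shifted_image K \<mu> (ssum {i..d} Vst) \<subseteq> ssum {i - 1..d} Vst"
proof (rule shifted_image_ssum[OF subspace_ssum])
  fix k assume k: "k \<in> {i..d}"
  have "shifted_image K (c k) (Vst k) \<subseteq> ssum {j. j \<le> d \<and> Suc j = k} Vst"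
    using k by (intro K_dual_eigenspace) simp
  also have "\<dots> \<subseteq> ssum {i - 1..d} Vst"
    using k by (intro ssum_mono) auto
  finally show "shifted_image K \<mu> (Vst k) \<subseteq> ssum {i - 1..d} Vst"
    by (rule shifted_image_change[OF subspace_ssum]) (use k in \<open>auto intro!: ssum_superset\<close>)
qed

lemma dec_0D_action:
  assumes "i \<le> d"
  shows "shifted_image K (c i) (Vs i) \<subseteq> ssum {Suc i..d} Vs"
    and "shifted_image (matrix_inv K) (inverse (c i)) (Vs i) \<subseteq> ssum {j. j \<le> d \<and> j = Suc i} Vs"
proof -
  have "shifted_image K (c i) (Vs i) \<subseteq> shifted_image K (c i) (ssum {i..d} Vs)"
    using assms by (intro shifted_image_mono ssum_superset) simp
  also have "\<dots> \<subseteq> ssum {Suc i..d} Vs"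
    using split_K by (rule tail_diagonal)
  finally show "shifted_image K (c i) (Vs i) \<subseteq> ssum {Suc i..d} Vs" .
qed (rule Kinv_eigenspace[OF assms])

lemma dec_0sDs_action:
  assumes "i \<le> d"
  shows "shifted_image K (c i) (Vst i) \<subseteq> ssum {j. j \<le> d \<and> Suc j = i} Vst"
    and "shifted_image (matrix_inv K) (inverse (c i)) (Vst i) \<subseteq> ssum {..<i} Vst"
proof -
  have "shifted_image (matrix_inv K) (inverse (c i)) (Vst i)
      \<subseteq> shifted_image (matrix_inv K) (inverse (c i)) (ssum {..i} Vst)"
    by (intro shifted_image_mono ssum_superset) simp
  also have "\<dots> \<subseteq> ssum {..<i} Vst"
    using split_Kinv by (rule head_diagonal)
  finally show "shifted_image (matrix_inv K) (inverse (c i)) (Vst i) \<subseteq> ssum {..<i} Vst" .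
qed (rule K_dual_eigenspace[OF assms])

lemma dec_0sD_action:
  shows "shifted_image K (c i) (dec_0sD d Vs Vst i) = {0}"
    and "shifted_image (matrix_inv K) (inverse (c i)) (dec_0sD d Vs Vst i) = {0}"
proof -
  show "shifted_image K (c i) (dec_0sD d Vs Vst i) = {0}"
    by (rule shifted_image_eigenspace[OF subspace_dec_0sD split_K])
  show "shifted_image (matrix_inv K) (inverse (c i)) (dec_0sD d Vs Vst i) = {0}"
    by (rule shifted_image_eigenspace[OF subspace_dec_0sD split_Kinv])
qed

lemma dec_0s0_action:
  assumes "i \<le> d"
  shows "shifted_image K (c i) (dec_0s0 d Vs Vst i) \<subseteq> ssum {..<i} (dec_0s0 d Vs Vst)"
    and "shifted_image (matrix_inv K) (inverse (c i)) (dec_0s0 d Vs Vst i)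
      \<subseteq> ssum {j. j \<le> d \<and> Suc j = i} (dec_0s0 d Vs Vst)"
proof -
  have U: "dec_0s0 d Vs Vst k = ssum {..k} Vst \<inter> ssum {..d - k} Vs" for k
    unfolding dec_0s0_def ..
  have head: "shifted_image M (f i) (dec_0s0 d Vs Vst i) \<subseteq> ssum {..<i} Vst"
    if "\<And>j. dec_0sD d Vs Vst j \<subseteq> eigenspace M (f j)" for M f
    using shifted_image_mono[of "dec_0s0 d Vs Vst i" "ssum {..i} Vst"] head_diagonal[OF that, of i]
    unfolding U by blast
  show "shifted_image K (c i) (dec_0s0 d Vs Vst i) \<subseteq> ssum {..<i} (dec_0s0 d Vs Vst)"
    using head[OF split_K] assms by (simp add: ssum_dec_0s0)
  show "shifted_image (matrix_inv K) (inverse (c i)) (dec_0s0 d Vs Vst i)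
      \<subseteq> ssum {j. j \<le> d \<and> Suc j = i} (dec_0s0 d Vs Vst)"
  proof (cases i)
    case 0
    then show ?thesis
      using head[OF split_Kinv] by simp
  next
    case (Suc k)
    have "Suc (d - i) = d - k"
      using Suc assms by simp
    then have "shifted_image (matrix_inv K) (inverse (c i)) (ssum {..d - i} Vs) \<subseteq> ssum {..d - k} Vs"
      using Kinv_head[of "d - i"] Suc assms by simp
    moreover have "shifted_image (matrix_inv K) (inverse (c i)) (dec_0s0 d Vs Vst i) \<subseteq> ssum {..k} Vst"
      using head[OF split_Kinv] Suc by (simp add: lessThan_Suc_atMost)
    ultimately have "shifted_image (matrix_inv K) (inverse (c i)) (dec_0s0 d Vs Vst i)
        \<subseteq> dec_0s0 d Vs Vst k"
      using shifted_image_mono[of "dec_0s0 d Vs Vst i" "ssum {..d - i} Vs"] unfolding U by blast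
    moreover have "{j. j \<le> d \<and> Suc j = i} = {k}"
      using Suc assms by auto
    ultimately show ?thesis
      by (simp add: ssum_singleton U vec.subspace_inter)
  qed
qed

lemma dec_Ds0_action:
  assumes "i \<le> d"
  shows "(\<lambda>v. K *v v) ` dec_Ds0 d Vs Vst i \<subseteq> ssum {..min d (Suc i)} (dec_Ds0 d Vs Vst)"
    and "(\<lambda>v. matrix_inv K *v v) ` dec_Ds0 d Vs Vst i \<subseteq> ssum {i - 1..d} (dec_Ds0 d Vs Vst)"
proof -
  have U: "dec_Ds0 d Vs Vst i = ssum {d - i..d} Vst \<inter> ssum {..d - i} Vs"
    unfolding dec_Ds0_def ..
  have "(\<lambda>v. K *v v) ` dec_Ds0 d Vs Vst i \<subseteq> shifted_image K 0 (ssum {d - i..d} Vst)"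
    unfolding shifted_image_zero U by (intro shifted_image_mono) blast
  also have "\<dots> \<subseteq> ssum {d - min d (Suc i)..d} Vst"
  proof -
    have "d - min d (Suc i) = d - Suc i"
      by auto
    then show ?thesis
      using K_dual_tail[of "d - i" 0] by simp
  qed
  also have "\<dots> = ssum {..min d (Suc i)} (dec_Ds0 d Vs Vst)"
    by (simp add: ssum_dec_Ds0)
  finally show "(\<lambda>v. K *v v) ` dec_Ds0 d Vs Vst i \<subseteq> ssum {..min d (Suc i)} (dec_Ds0 d Vs Vst)" .
  show "(\<lambda>v. matrix_inv K *v v) ` dec_Ds0 d Vs Vst i \<subseteq> ssum {i - 1..d} (dec_Ds0 d Vs Vst)"
  proof (cases i)
    case 0
    then show ?thesis
      using tail_0_eq_UNIV by (simp add: ssum_dec_Ds0 atMost_atLeast0)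
  next
    case (Suc k)
    then have "Suc (d - i) = d - k"
      using assms by simp
    have "(\<lambda>v. matrix_inv K *v v) ` dec_Ds0 d Vs Vst i
        \<subseteq> shifted_image (matrix_inv K) 0 (ssum {..d - i} Vs)"
      unfolding shifted_image_zero U by (intro shifted_image_mono) blast
    also have "\<dots> \<subseteq> ssum {..d - k} Vs"
      using Kinv_head[of "d - i" 0] Suc assms unfolding \<open>Suc (d - i) = d - k\<close> by simp
    finally show ?thesis
      using Suc assms by (simp add: ssum_dec_Ds0)
  qed
qed

lemma dec_DsD_action:
  assumes "i \<le> d"
  shows "shifted_image K (c i) (dec_DsD d Vs Vst i)
      \<subseteq> ssum {j. j \<le> d \<and> j = Suc i} (dec_DsD d Vs Vst)"
    and "shifted_image (matrix_inv K) (inverse (c i)) (dec_DsD d Vs Vst i)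
      \<subseteq> ssum {Suc i..d} (dec_DsD d Vs Vst)"
proof -
  have U: "dec_DsD d Vs Vst k = ssum {d - k..d} Vst \<inter> ssum {k..d} Vs" for k
    unfolding dec_DsD_def ..
  have tail: "shifted_image M (f i) (dec_DsD d Vs Vst i) \<subseteq> ssum {Suc i..d} Vs"
    if "\<And>j. dec_0sD d Vs Vst j \<subseteq> eigenspace M (f j)" for M f
    using shifted_image_mono[of "dec_DsD d Vs Vst i" "ssum {i..d} Vs"] tail_diagonal[OF that, of i]
    unfolding U by blast
  show "shifted_image K (c i) (dec_DsD d Vs Vst i)
      \<subseteq> ssum {j. j \<le> d \<and> j = Suc i} (dec_DsD d Vs Vst)"
  proof (cases "i < d")
    case True
    have "shifted_image K (c i) (ssum {d - i..d} Vst) \<subseteq> ssum {d - Suc i..d} Vst"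
      using K_dual_tail[of "d - i" "c i"] by simp
    then have "shifted_image K (c i) (dec_DsD d Vs Vst i) \<subseteq> dec_DsD d Vs Vst (Suc i)"
      using tail[OF split_K] shifted_image_mono[of "dec_DsD d Vs Vst i" "ssum {d - i..d} Vst"]
      unfolding U by blast
    moreover have "{j. j \<le> d \<and> j = Suc i} = {Suc i}"
      using True by auto
    ultimately show ?thesis
      by (simp add: ssum_singleton U vec.subspace_inter)
  next
    case False
    then show ?thesis
      using tail[OF split_K] by auto
  qed
  show "shifted_image (matrix_inv K) (inverse (c i)) (dec_DsD d Vs Vst i)
      \<subseteq> ssum {Suc i..d} (dec_DsD d Vs Vst)"
    using tail[OF split_Kinv] by (simp add: ssum_dec_DsD)
qed

end

theorem theorem11p1:
  fixes A As K :: "'k::field^'n::finite^'n"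
    and q a as :: 'k
    and d :: nat
    and Vs Vst :: "nat \<Rightarrow> ('k^'n) set"
  assumes "alg_closed_field TYPE('k)"
    and "q \<noteq> 0" and "\<forall>m::nat. m > 0 \<longrightarrow> q ^ m \<noteq> 1"
    and "tridiagonal_pair A As"
    and "standard_ordering A As d Vs"
    and "standard_ordering As A d Vst"
    and "a \<noteq> 0" and "as \<noteq> 0"
    and "\<forall>i\<le>d. Vs i = eigenspace A (a * q powi (2 * int i - int d))"
    and "\<forall>i\<le>d. Vst i = eigenspace As (as * q powi (int d - 2 * int i))"
    and "\<forall>i\<le>d. \<forall>v\<in>dec_0sD d Vs Vst i. K *v v = q powi (2 * int i - int d) *s v"
  shows
   "(let U = dec_0D d Vs Vst in \<forall>i\<le>d.
        shifted_image K (q powi (2 * int i - int d)) (U i) \<subseteq> ssum {i+1..d} U \<and>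
        shifted_image (matrix_inv K) (q powi (int d - 2 * int i)) (U i)
           \<subseteq> ssum {j. j \<le> d \<and> j = i + 1} U) \<and>
    (let U = dec_0sDs d Vs Vst in \<forall>i\<le>d.
        shifted_image K (q powi (2 * int i - int d)) (U i) \<subseteq> ssum {j. j \<le> d \<and> j + 1 = i} U \<and>
        shifted_image (matrix_inv K) (q powi (int d - 2 * int i)) (U i) \<subseteq> ssum {..<i} U) \<and>
    (let U = dec_0sD d Vs Vst in \<forall>i\<le>d.
        shifted_image K (q powi (2 * int i - int d)) (U i) = {0} \<and>
        shifted_image (matrix_inv K) (q powi (int d - 2 * int i)) (U i) = {0}) \<and>
    (let U = dec_0s0 d Vs Vst in \<forall>i\<le>d.
        shifted_image K (q powi (2 * int i - int d)) (U i) \<subseteq> ssum {..<i} U \<and>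
        shifted_image (matrix_inv K) (q powi (int d - 2 * int i)) (U i)
           \<subseteq> ssum {j. j \<le> d \<and> j + 1 = i} U) \<and>
    (let U = dec_Ds0 d Vs Vst in \<forall>i\<le>d.
        (\<lambda>v. K *v v) ` U i \<subseteq> ssum {..min d (i+1)} U \<and>
        (\<lambda>v. matrix_inv K *v v) ` U i \<subseteq> ssum {i-1..d} U) \<and>
    (let U = dec_DsD d Vs Vst in \<forall>i\<le>d.
        shifted_image K (q powi (2 * int i - int d)) (U i) \<subseteq> ssum {j. j \<le> d \<and> j = i + 1} U \<and>
        shifted_image (matrix_inv K) (q powi (int d - 2 * int i)) (U i) \<subseteq> ssum {i+1..d} U)"
proof -
  define c where "c i = q powi (2 * int i - int d)" for i
  have c_inverse: "q powi (int d - 2 * int i) = inverse (c i)" for i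
    unfolding c_def by (simp add: power_int_minus[symmetric])
  interpret tridiagonal_K_setting A As d Vs Vst a as c K q
    using assms power_int_geometric power_int_geometric_inj[OF assms(2,3)]
    by unfold_locales (auto simp: c_def[abs_def] c_inverse)
  show ?thesis
    unfolding Let_def c_def[symmetric] c_inverse
    using dec_0D_action dec_0sDs_action dec_0sD_action dec_0s0_action dec_Ds0_action dec_DsD_action
    by simp
qed

end
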